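(* For $k\ge1$ let $\Delta^k=\{\mathbf{x}\in\mathbb{R}^k:x_i\ge0,\ \sum_i x_i\le1\}$ and define $g:\Delta^k\to\mathbb{R}$ by $$g(\mathbf{x})=-\sum_i x_i\ln x_i+\sum_i(1-x_i)\ln(1-x_i)-2\Big(1-\sum_i x_i\Big)\ln\Big(1-\sum_i x_i\Big)$$ (with $0\ln 0=0$). Then $g$ is concave on $\Delta^k$, and in the interior of $\Delta^k$, $$\frac{\partial g}{\partial x_i}=\ln\left(\frac{(1-\sum_j x_j)^2}{x_i(1-x_i)}\right).$$ *)

theory Defs
  imports "HOL-Analysis.Analysis"
begin

definition xlnx :: "real \<Rightarrow> real" where
  "xlnx t = (if t = 0 then 0 else t * ln t)"

text \<open>The standard corner simplex in R^k, with k = CARD('n).\<close>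
definition simplexk :: "(real^'n) set" where
  "simplexk = {x. (\<forall>i. 0 \<le> x $ i) \<and> (\<Sum>i\<in>UNIV. x $ i) \<le> 1}"

definition gfun :: "real^'n \<Rightarrow> real" where
  "gfun x = - (\<Sum>i\<in>UNIV. xlnx (x $ i)) + (\<Sum>i\<in>UNIV. xlnx (1 - x $ i))
            - 2 * xlnx (1 - (\<Sum>i\<in>UNIV. x $ i))"

end

theory Submission
  imports Defs "HOL-Real_Asymp.Real_Asymp"
begin

(* Along a line t \<mapsto> x + t v inside the open simplex, g has second derivative
     \<Sum> v_i^2/(1 - x_i) - \<Sum> v_i^2/x_i - 2 (\<Sum> v_i)^2/(1 - \<Sum> x_i),
   and this is \<le> 0: a coordinate x_i \<le> 1/2 contributes a nonpositive amount, at most one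
   coordinate exceeds 1/2, and its excess is paid for by the other coordinates and by the last term
   via a weighted Cauchy-Schwarz inequality. So g is concave on the open simplex, and by continuity
   on the closed one, every point of which is the limit of segments ending in the open simplex.
   The partial derivatives come from (t ln t)' = ln t + 1; the constants cancel. *)

lemma power2_sum_le_weighted:
  fixes w v :: "'a \<Rightarrow> real"
  assumes "\<And>j. j \<in> J \<Longrightarrow> 0 < w j"
  shows "(sum v J)\<^sup>2 \<le> sum w J * (\<Sum>j\<in>J. (v j)\<^sup>2 / w j)"
proof -
  have "(sum v J)\<^sup>2 = (\<Sum>j\<in>J. sqrt (w j) * (v j / sqrt (w j)))\<^sup>2"
    using assms by (intro arg_cong[where f = "\<lambda>s. s\<^sup>2"] sum.cong) force+
  also have "\<dots> \<le> (\<Sum>j\<in>J. (sqrt (w j))\<^sup>2) * (\<Sum>j\<in>J. (v j / sqrt (w j))\<^sup>2)"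
    by (rule Cauchy_Schwarz_ineq_sum)
  also have "\<dots> = sum w J * (\<Sum>j\<in>J. (v j)\<^sup>2 / w j)"
    using assms by (intro arg_cong2[where f = "(*)"] sum.cong) (auto simp: power_divide less_imp_le)
  finally show ?thesis .
qed

lemma power2_add_le_weighted:
  fixes a b p q :: real
  assumes "0 < p" "0 < q"
  shows "(a + b)\<^sup>2 \<le> (p + q) * (a\<^sup>2 / p + b\<^sup>2 / q)"
  using power2_sum_le_weighted[of UNIV "\<lambda>j. if j then p else q" "\<lambda>j. if j then a else b"] assms
  by (simp add: UNIV_bool add.commute)

lemma square_div_one_minus_le:
  fixes x T v :: real
  assumes "0 < x" "x \<le> T" "T < 1"
  shows "v\<^sup>2 / (1 - x) \<le> T / (1 - T) * (v\<^sup>2 / x)"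
proof -
  have "x / (1 - x) \<le> T / (1 - T)"
    using assms by (simp add: field_simps)
  then have "x / (1 - x) * (v\<^sup>2 / x) \<le> T / (1 - T) * (v\<^sup>2 / x)"
    using assms by (intro mult_right_mono) auto
  then show ?thesis
    using assms by simp
qed

lemma half_add_frac_le:
  fixes r T :: real
  assumes "0 < r" "0 < T" "r + T < 1/2"
  shows "r / 2 + T * (1 - T) / (1 - 2 * T) \<le> (r + T) * (1 - (r + T)) / (1 - 2 * (r + T))"
proof -
  have split: "t * (1 - t) / (1 - 2 * t) = t / 2 + t / (2 * (1 - 2 * t))" if "t < 1/2" for t :: real
    using that by (simp add: field_simps)
  have "T / (2 * (1 - 2 * T)) \<le> (r + T) / (2 * (1 - 2 * (r + T)))"
    using assms by (intro frac_le) auto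
  moreover have "T < 1/2" "r + T < 1/2"
    using assms by auto
  ultimately show ?thesis
    by (simp only: split add_divide_distrib)
qed

lemma power2_diff_div_le:
  fixes r T S W :: real
  assumes "0 < r" "0 < T" "r + T < 1/2"
  shows "(S - W)\<^sup>2 / (r + T) - (S - W)\<^sup>2 / (1 - (r + T)) \<le> (1 - 2 * T) / (1 - T) * (W\<^sup>2 / T) + 2 * S\<^sup>2 / r"
proof -
  define m where "m = r + T"
  (* Cauchy-Schwarz with weights r/2 and F; their sum fits under m (1 - m) / (1 - 2 m). *)
  define F where "F = T * (1 - T) / (1 - 2 * T)"
  have "0 < m" "m < 1/2" "0 < F"
    using assms by (auto simp: m_def F_def)
  have c_eq: "1 / m - 1 / (1 - m) = (1 - 2 * m) / (m * (1 - m))"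
    using \<open>0 < m\<close> \<open>m < 1/2\<close> by (simp add: field_simps)
  have c_nonneg: "0 \<le> 1 / m - 1 / (1 - m)"
    using \<open>0 < m\<close> \<open>m < 1/2\<close> by (simp add: c_eq)
  have "r / 2 + F \<le> m * (1 - m) / (1 - 2 * m)"
    using half_add_frac_le[OF assms] by (simp add: F_def m_def)
  then have c_le: "(1 / m - 1 / (1 - m)) * (r / 2 + F) \<le> 1"
    using \<open>0 < m\<close> \<open>m < 1/2\<close> by (simp add: c_eq field_simps)
  have "(S - W)\<^sup>2 / m - (S - W)\<^sup>2 / (1 - m) = (1 / m - 1 / (1 - m)) * (S + - W)\<^sup>2"
    by (simp add: diff_divide_distrib algebra_simps)
  also have "\<dots> \<le> (1 / m - 1 / (1 - m)) * ((r / 2 + F) * (S\<^sup>2 / (r / 2) + (- W)\<^sup>2 / F))"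
    using power2_add_le_weighted[of "r / 2" F S "- W"] assms \<open>0 < F\<close> c_nonneg
    by (intro mult_left_mono) auto
  also have "\<dots> \<le> S\<^sup>2 / (r / 2) + W\<^sup>2 / F"
    using c_le assms \<open>0 < F\<close> mult_right_mono[OF c_le, of "S\<^sup>2 / (r / 2) + W\<^sup>2 / F"]
    by (simp add: mult.assoc)
  also have "\<dots> = (1 - 2 * T) / (1 - T) * (W\<^sup>2 / T) + 2 * S\<^sup>2 / r"
    using assms by (simp add: F_def field_simps)
  finally show ?thesis
    by (simp add: m_def)
qed

lemma sum_power2_div_one_minus_le:
  fixes x v :: "'a::finite \<Rightarrow> real"
  assumes pos: "\<And>i. 0 < x i" and sum_lt: "sum x UNIV < 1"
  shows "(\<Sum>i\<in>UNIV. (v i)\<^sup>2 / (1 - x i))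
           \<le> (\<Sum>i\<in>UNIV. (v i)\<^sup>2 / x i) + 2 * (sum v UNIV)\<^sup>2 / (1 - sum x UNIV)"
proof (cases "\<forall>i. x i \<le> 1/2")
  case True
  then have "(\<Sum>i\<in>UNIV. (v i)\<^sup>2 / (1 - x i)) \<le> (\<Sum>i\<in>UNIV. (v i)\<^sup>2 / x i)"
  proof (intro sum_mono divide_left_mono)
    fix j
    have "x j \<le> 1/2" "0 < x j"
      using True pos by auto
    then show "x j \<le> 1 - x j" "0 < (1 - x j) * x j"
      by auto
  qed simp
  moreover have "0 \<le> 2 * (sum v UNIV)\<^sup>2 / (1 - sum x UNIV)"
    using sum_lt by simp
  ultimately show ?thesis
    by linarith
next
  case False
  (* Only a coordinate with x i > 1/2 can have v^2/(1 - x) larger than v^2/x,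
     and there is at most one such coordinate. *)
  then obtain i where xi: "1/2 < x i"
    by (auto simp: not_le)
  define J where "J = - {i}"
  define T where "T = sum x J"
  define W where "W = sum v J"
  define Q where "Q = (\<Sum>j\<in>J. (v j)\<^sup>2 / x j)"
  define S where "S = sum v UNIV"
  define r where "r = 1 - sum x UNIV"
  have "0 < r"
    using sum_lt by (simp add: r_def)
  have sum_x: "x i = 1 - (r + T)" and sum_v: "v i = S - W"
    by (simp_all add: r_def T_def S_def W_def J_def sum.remove[of UNIV i] Compl_eq_Diff_UNIV)
  have "0 \<le> Q"
    using pos by (auto simp: Q_def less_imp_le intro!: sum_nonneg)
  have "T < 1/2"
    using sum_x xi \<open>0 < r\<close> by linarith
  have x_le_T: "x j \<le> T" if "j \<in> J" for j
    unfolding T_def using that pos by (intro member_le_sum) (auto simp: less_imp_le)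
  have rest: "(\<Sum>j\<in>J. (v j)\<^sup>2 / (1 - x j)) \<le> T / (1 - T) * Q"
    unfolding Q_def sum_distrib_left
    using pos x_le_T \<open>T < 1/2\<close> by (intro sum_mono square_div_one_minus_le) auto
  have top: "(v i)\<^sup>2 / (1 - x i) - (v i)\<^sup>2 / x i \<le> (1 - 2 * T) / (1 - T) * Q + 2 * S\<^sup>2 / r"
  proof (cases "J = {}")
    case True
    then have "1 - x i = r" "v i = S"
      using sum_x sum_v by (simp_all add: T_def W_def)
    moreover have "0 \<le> (v i)\<^sup>2 / x i" "0 \<le> (1 - 2 * T) / (1 - T) * Q"
      using pos[of i] \<open>0 \<le> Q\<close> \<open>T < 1/2\<close> by simp_all
    moreover have "0 \<le> S\<^sup>2 / r"
      using \<open>0 < r\<close> by simp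
    ultimately show ?thesis
      by simp
  next
    case False
    have "0 < T"
      unfolding T_def using False pos by (intro sum_pos) auto
    have "W\<^sup>2 \<le> T * Q"
      unfolding W_def T_def Q_def using pos by (intro power2_sum_le_weighted) auto
    then have "W\<^sup>2 / T \<le> Q"
      using \<open>0 < T\<close> by (simp add: field_simps)
    then have "(1 - 2 * T) / (1 - T) * (W\<^sup>2 / T) \<le> (1 - 2 * T) / (1 - T) * Q"
      using \<open>T < 1/2\<close> by (intro mult_left_mono) auto
    moreover have "(S - W)\<^sup>2 / (r + T) - (S - W)\<^sup>2 / (1 - (r + T))
        \<le> (1 - 2 * T) / (1 - T) * (W\<^sup>2 / T) + 2 * S\<^sup>2 / r"
      using \<open>0 < r\<close> \<open>0 < T\<close> sum_x xi by (intro power2_diff_div_le) auto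
    ultimately show ?thesis
      using sum_x sum_v by simp
  qed
  have split: "(\<Sum>j\<in>UNIV. f j) = f i + (\<Sum>j\<in>J. f j)" for f :: "'a \<Rightarrow> real"
    by (simp add: J_def sum.remove[of UNIV i] Compl_eq_Diff_UNIV)
  have "(1 - 2 * T) / (1 - T) * Q + T / (1 - T) * Q = Q"
    using \<open>T < 1/2\<close> by (simp add: add_divide_distrib[symmetric] distrib_right[symmetric])
  then show ?thesis
    unfolding split[of "\<lambda>j. (v j)\<^sup>2 / (1 - x j)"] split[of "\<lambda>j. (v j)\<^sup>2 / x j"]
      S_def[symmetric] r_def[symmetric] Q_def[symmetric]
    using top rest by linarith
qed

lemma has_real_derivative_xlnx: "0 < y \<Longrightarrow> (xlnx has_real_derivative ln y + 1) (at y)"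
proof -
  assume "0 < y"
  then have "((\<lambda>t. t * ln t) has_real_derivative ln y + 1) (at y)"
    by (auto intro!: derivative_eq_intros)
  then show ?thesis
    by (rule has_field_derivative_transform_within_open[where S = "{0<..}"])
      (use \<open>0 < y\<close> in \<open>auto simp: xlnx_def\<close>)
qed

lemma has_real_derivative_xlnx_comp [derivative_intros]:
  "(f has_real_derivative f') (at t) \<Longrightarrow> 0 < f t \<Longrightarrow> D = (ln (f t) + 1) * f' \<Longrightarrow>
   ((\<lambda>t. xlnx (f t)) has_real_derivative D) (at t)"
  using DERIV_chain2[OF has_real_derivative_xlnx] by blast

lemma isCont_xlnx: "isCont xlnx y"
proof -
  have xlnx_eq: "xlnx = (\<lambda>t. t * ln t)"
    by (auto simp: xlnx_def fun_eq_iff)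
  show ?thesis
  proof (cases "y = 0")
    case True
    have right: "((\<lambda>t::real. t * ln t) \<longlongrightarrow> 0) (at_right 0)"
      by real_asymp
    have "((\<lambda>t::real. - (t * ln t)) \<longlongrightarrow> 0) (at_right 0)"
      by real_asymp
    then have "((\<lambda>t::real. (- t) * ln (- t)) \<longlongrightarrow> 0) (at_right (- 0))"
      by (simp add: ln_minus)
    then have left: "((\<lambda>t::real. t * ln t) \<longlongrightarrow> 0) (at_left 0)"
      by (simp add: filterlim_at_left_to_right[where a = 0])
    show ?thesis
      unfolding isCont_def xlnx_eq True using filterlim_split_at[OF left right] by simp
  next
    case False
    then show ?thesis
      unfolding xlnx_eq by (intro continuous_intros isCont_ln)
  qed
qed

lemma isCont_xlnx_comp [continuous_intros]: "isCont f x \<Longrightarrow> isCont (\<lambda>x. xlnx (f x)) x"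
  using isCont_o2 isCont_xlnx by blast

lemma convex_line_vimage:
  assumes "convex S"
  shows "convex {t :: real. x + t *\<^sub>R v \<in> S}"
  unfolding convex_def
proof clarsimp
  fix s t a b :: real
  assume "x + s *\<^sub>R v \<in> S" "x + t *\<^sub>R v \<in> S" "0 \<le> a" "0 \<le> b" "a + b = 1"
  then have "a *\<^sub>R (x + s *\<^sub>R v) + b *\<^sub>R (x + t *\<^sub>R v) \<in> S"
    using assms unfolding convex_def by blast
  moreover have "a *\<^sub>R (x + s *\<^sub>R v) + b *\<^sub>R (x + t *\<^sub>R v) = x + (a * s + b * t) *\<^sub>R v"
    using \<open>a + b = 1\<close> by (simp add: algebra_simps flip: scaleR_add_left)
  ultimately show "x + (a * s + b * t) *\<^sub>R v \<in> S"
    by simp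
qed

lemma concave_on_if_concave_on_lines:
  fixes f :: "'a::real_vector \<Rightarrow> real"
  assumes "convex S"
    and lines: "\<And>x v. x \<in> S \<Longrightarrow> concave_on {t. x + t *\<^sub>R v \<in> S} (\<lambda>t. f (x + t *\<^sub>R v))"
  shows "concave_on S f"
  unfolding concave_on_iff
proof (intro conjI assms ballI allI impI)
  fix x y :: 'a and u w :: real
  assume "x \<in> S" "y \<in> S" "0 \<le> u" "0 \<le> w" "u + w = 1"
  have "0 \<in> {t. x + t *\<^sub>R (y - x) \<in> S}" "1 \<in> {t. x + t *\<^sub>R (y - x) \<in> S}"
    using \<open>x \<in> S\<close> \<open>y \<in> S\<close> by auto
  from concave_onD[OF lines[OF \<open>x \<in> S\<close>] _ _ this, of w] \<open>0 \<le> u\<close> \<open>0 \<le> w\<close> \<open>u + w = 1\<close>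
  have "u * f x + w * f y \<le> f (x + w *\<^sub>R (y - x))"
    by (simp add: eq_diff_eq[symmetric])
  also have "x + w *\<^sub>R (y - x) = u *\<^sub>R x + w *\<^sub>R y"
    using \<open>u + w = 1\<close> by (simp add: algebra_simps flip: scaleR_add_left)
  finally show "u * f x + w * f y \<le> f (u *\<^sub>R x + w *\<^sub>R y)" .
qed

lemma concave_on_if_segments_into:
  fixes f :: "'a::real_normed_vector \<Rightarrow> real"
  assumes "concave_on U f" "convex C"
    and into: "\<And>a e. a \<in> C \<Longrightarrow> 0 < e \<Longrightarrow> e \<le> 1 \<Longrightarrow> a + e *\<^sub>R (c - a) \<in> U"
    and cont: "\<And>a. a \<in> C \<Longrightarrow> isCont f a"
  shows "concave_on C f"
  unfolding concave_on_iff
proof (intro conjI assms ballI allI impI)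
  fix a b :: 'a and u w :: real
  assume "a \<in> C" "b \<in> C" "0 \<le> u" "0 \<le> w" "u + w = 1"
  define p where "p = u *\<^sub>R a + w *\<^sub>R b"
  have "p \<in> C"
    using \<open>convex C\<close> \<open>a \<in> C\<close> \<open>b \<in> C\<close> \<open>0 \<le> u\<close> \<open>0 \<le> w\<close> \<open>u + w = 1\<close>
    unfolding p_def convex_def by blast
  define h where "h e = f (p + e *\<^sub>R (c - p)) - (u * f (a + e *\<^sub>R (c - a)) + w * f (b + e *\<^sub>R (c - b)))" for e
  have eventually_nonneg: "\<forall>\<^sub>F e in at_right 0. 0 \<le> h e"
    unfolding eventually_at_right_field
  proof (intro exI[of _ 1] conjI allI impI)
    fix e :: real
    assume "0 < e" "e < 1"
    have "u * f (a + e *\<^sub>R (c - a)) + w * f (b + e *\<^sub>R (c - b))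
        \<le> f (u *\<^sub>R (a + e *\<^sub>R (c - a)) + w *\<^sub>R (b + e *\<^sub>R (c - b)))"
      using \<open>concave_on U f\<close> into \<open>a \<in> C\<close> \<open>b \<in> C\<close> \<open>0 < e\<close> \<open>e < 1\<close> \<open>0 \<le> u\<close> \<open>0 \<le> w\<close> \<open>u + w = 1\<close>
      unfolding concave_on_iff by simp
    also have "u *\<^sub>R (a + e *\<^sub>R (c - a)) + w *\<^sub>R (b + e *\<^sub>R (c - b)) = p + e *\<^sub>R ((u + w) *\<^sub>R c - p)"
      by (simp add: p_def algebra_simps)
    finally show "0 \<le> h e"
      using \<open>u + w = 1\<close> by (simp add: h_def)
  qed simp
  have limit: "(h \<longlongrightarrow> f p - (u * f a + w * f b)) (at_right 0)"
  proof -
    have "((\<lambda>e. f (q + e *\<^sub>R (c - q))) \<longlongrightarrow> f q) (at_right 0)" if "q \<in> C" for q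
      by (rule isCont_tendsto_compose[OF cont[OF that]]) (auto intro!: tendsto_eq_intros)
    then show ?thesis
      unfolding h_def using \<open>a \<in> C\<close> \<open>b \<in> C\<close> \<open>p \<in> C\<close> by (intro tendsto_intros)
  qed
  have "0 \<le> f p - (u * f a + w * f b)"
    using tendsto_lowerbound[OF limit eventually_nonneg] by simp
  then show "u * f a + w * f b \<le> f (u *\<^sub>R a + w *\<^sub>R b)"
    by (simp add: p_def)
qed

definition open_simplexk :: "(real^'n) set" where
  "open_simplexk = {x. (\<forall>i. 0 < x $ i) \<and> (\<Sum>i\<in>UNIV. x $ i) < 1}"

lemma open_simplexk_subset: "open_simplexk \<subseteq> simplexk"
  by (auto simp: open_simplexk_def simplexk_def less_imp_le)

lemma open_simplexk_component_lt_1: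
  assumes "x \<in> open_simplexk"
  shows "x $ i < 1"
proof -
  have "x $ i \<le> (\<Sum>j\<in>UNIV. x $ j)"
    using assms by (intro member_le_sum) (auto simp: open_simplexk_def less_imp_le)
  then show ?thesis
    using assms by (simp add: open_simplexk_def)
qed

lemma simplexk_segment_into_open:
  assumes a: "a \<in> simplexk" and c: "c \<in> open_simplexk" and "0 < e" "e \<le> 1"
  shows "a + e *\<^sub>R (c - a) \<in> open_simplexk"
proof -
  have coord: "(a + e *\<^sub>R (c - a)) $ i = (1 - e) * a $ i + e * c $ i" for i
    by (simp add: algebra_simps)
  have "0 < (1 - e) * a $ i + e * c $ i" for i
    using a c \<open>0 < e\<close> \<open>e \<le> 1\<close>
    by (intro add_nonneg_pos) (auto simp: simplexk_def open_simplexk_def)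
  moreover have "(\<Sum>i\<in>UNIV. (1 - e) * a $ i + e * c $ i) < 1"
  proof -
    have "(\<Sum>i\<in>UNIV. (1 - e) * a $ i + e * c $ i) = (1 - e) * (\<Sum>i\<in>UNIV. a $ i) + e * (\<Sum>i\<in>UNIV. c $ i)"
      by (simp add: sum.distrib sum_distrib_left)
    also have "\<dots> < (1 - e) * 1 + e * 1"
      using a c \<open>0 < e\<close> \<open>e \<le> 1\<close>
      by (intro add_le_less_mono mult_left_mono mult_strict_left_mono) (auto simp: simplexk_def open_simplexk_def)
    finally show ?thesis
      by simp
  qed
  ultimately show ?thesis
    unfolding open_simplexk_def mem_Collect_eq coord by blast
qed

lemma convex_open_simplexk: "convex (open_simplexk :: (real^'n) set)"
  unfolding convex_alt
proof (intro ballI allI impI)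
  fix x y :: "real^'n" and u :: real
  assume "x \<in> open_simplexk" "y \<in> open_simplexk" "0 \<le> u \<and> u \<le> 1"
  then show "(1 - u) *\<^sub>R x + u *\<^sub>R y \<in> open_simplexk"
    using simplexk_segment_into_open[of x y u] open_simplexk_subset
    by (cases "u = 0") (auto simp: algebra_simps)
qed

lemma convex_simplexk: "convex (simplexk :: (real^'n) set)"
  unfolding convex_def
proof (intro ballI allI impI)
  fix x y :: "real^'n" and u v :: real
  assume "x \<in> simplexk" "y \<in> simplexk" "0 \<le> u" "0 \<le> v" "u + v = 1"
  then have "(\<Sum>i\<in>UNIV. u * x $ i + v * y $ i) \<le> u * 1 + v * 1"
    unfolding sum.distrib sum_distrib_left[symmetric]
    by (intro add_mono mult_left_mono) (auto simp: simplexk_def)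
  then show "u *\<^sub>R x + v *\<^sub>R y \<in> simplexk"
    using \<open>x \<in> simplexk\<close> \<open>y \<in> simplexk\<close> \<open>0 \<le> u\<close> \<open>0 \<le> v\<close> \<open>u + v = 1\<close>
    by (auto simp: simplexk_def)
qed

lemma interior_simplexk_subset: "interior (simplexk :: (real^'n) set) \<subseteq> open_simplexk"
proof
  fix x :: "real^'n"
  assume "x \<in> interior simplexk"
  then obtain e where "0 < e" and ball: "ball x e \<subseteq> simplexk"
    by (meson mem_interior)
  have shifted: "x + d *\<^sub>R axis i 1 \<in> simplexk" if "\<bar>d\<bar> < e" for d i
    using ball that by (auto simp: dist_norm)
  have "x + (- e / 2) *\<^sub>R axis i 1 \<in> simplexk" for i
    using \<open>0 < e\<close> by (intro shifted) simp
  then have lower: "0 \<le> (x + (- e / 2) *\<^sub>R axis i 1) $ i" for i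
    unfolding simplexk_def by blast
  have positive: "0 < x $ i" for i
    using lower[of i] \<open>0 < e\<close> by (simp add: axis_def)
  have "x + (e / 2) *\<^sub>R axis i 1 \<in> simplexk" for i
    using \<open>0 < e\<close> by (intro shifted) simp
  then have upper: "(\<Sum>j\<in>UNIV. (x + (e / 2) *\<^sub>R axis i 1) $ j) \<le> 1" for i
    unfolding simplexk_def by blast
  have "(\<Sum>j\<in>UNIV. x $ j) + e / 2 \<le> 1"
    using upper[of undefined] by (simp add: sum.distrib axis_def flip: sum_distrib_left sum_divide_distrib)
  with positive \<open>0 < e\<close> show "x \<in> open_simplexk"
    by (simp add: open_simplexk_def)
qed

lemma uniform_point_in_open_simplexk: "(\<chi> i. 1 / (2 * real CARD('n))) \<in> (open_simplexk :: (real^'n) set)"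
  by (simp add: open_simplexk_def)

definition gfun_slope :: "real^'n \<Rightarrow> real^'n \<Rightarrow> real" where
  "gfun_slope x v =
     (\<Sum>i\<in>UNIV. (2 * ln (1 - (\<Sum>j\<in>UNIV. x $ j)) - ln (x $ i) - ln (1 - x $ i)) * v $ i)"

definition gfun_curvature :: "real^'n \<Rightarrow> real^'n \<Rightarrow> real" where
  "gfun_curvature x v =
     (\<Sum>i\<in>UNIV. (v $ i)\<^sup>2 / (1 - x $ i)) - (\<Sum>i\<in>UNIV. (v $ i)\<^sup>2 / x $ i)
       - 2 * (\<Sum>i\<in>UNIV. v $ i)\<^sup>2 / (1 - (\<Sum>i\<in>UNIV. x $ i))"

lemma gfun_curvature_nonpos:
  assumes "x \<in> open_simplexk"
  shows "gfun_curvature x v \<le> 0"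
  using sum_power2_div_one_minus_le[of "\<lambda>i. x $ i" "\<lambda>i. v $ i"] assms
  by (simp add: gfun_curvature_def open_simplexk_def)

lemma gfun_line_has_derivative:
  fixes x v :: "real^'n"
  assumes "x + t *\<^sub>R v \<in> open_simplexk"
  shows "((\<lambda>s. gfun (x + s *\<^sub>R v)) has_real_derivative gfun_slope (x + t *\<^sub>R v) v) (at t)"
proof -
  define p where "p s j = x $ j + s * v $ j" for s j
  have pos: "0 < p t j" "0 < 1 - p t j" "0 < 1 - (\<Sum>j\<in>UNIV. p t j)" for j
    using assms open_simplexk_component_lt_1[OF assms, of j] by (auto simp: open_simplexk_def p_def)
  have dp: "((\<lambda>s. p s j) has_real_derivative v $ j) (at t)" for j
    unfolding p_def by (auto intro!: derivative_eq_intros)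
  have "((\<lambda>s. - (\<Sum>j\<in>UNIV. xlnx (p s j)) + (\<Sum>j\<in>UNIV. xlnx (1 - p s j)) - 2 * xlnx (1 - (\<Sum>j\<in>UNIV. p s j)))
      has_real_derivative
        - (\<Sum>j\<in>UNIV. (ln (p t j) + 1) * v $ j) + (\<Sum>j\<in>UNIV. (ln (1 - p t j) + 1) * (- v $ j))
        - 2 * ((ln (1 - (\<Sum>j\<in>UNIV. p t j)) + 1) * (- (\<Sum>j\<in>UNIV. v $ j)))) (at t)"
    by (rule derivative_eq_intros dp refl pos | simp)+
  also have "- (\<Sum>j\<in>UNIV. (ln (p t j) + 1) * v $ j) + (\<Sum>j\<in>UNIV. (ln (1 - p t j) + 1) * (- v $ j))
        - 2 * ((ln (1 - (\<Sum>j\<in>UNIV. p t j)) + 1) * (- (\<Sum>j\<in>UNIV. v $ j)))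
      = gfun_slope (x + t *\<^sub>R v) v"
    unfolding gfun_slope_def p_def
    by (simp add: algebra_simps sum.distrib sum_subtractf sum_negf flip: sum_distrib_left sum_distrib_right)
  finally show ?thesis
    by (simp add: gfun_def p_def)
qed

lemma gfun_slope_line_has_derivative:
  fixes x v :: "real^'n"
  assumes "x + t *\<^sub>R v \<in> open_simplexk"
  shows "((\<lambda>s. gfun_slope (x + s *\<^sub>R v) v) has_real_derivative gfun_curvature (x + t *\<^sub>R v) v) (at t)"
proof -
  define p where "p s j = x $ j + s * v $ j" for s j
  have pos: "0 < p t j" "0 < 1 - p t j" "0 < 1 - (\<Sum>j\<in>UNIV. p t j)" for j
    using assms open_simplexk_component_lt_1[OF assms, of j] by (auto simp: open_simplexk_def p_def)
  have dp: "((\<lambda>s. p s j) has_real_derivative v $ j) (at t)" for j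
    unfolding p_def by (auto intro!: derivative_eq_intros)
  have "((\<lambda>s. \<Sum>i\<in>UNIV. (2 * ln (1 - (\<Sum>j\<in>UNIV. p s j)) - ln (p s i) - ln (1 - p s i)) * v $ i)
      has_real_derivative
        (\<Sum>i\<in>UNIV. (2 * (- (\<Sum>j\<in>UNIV. v $ j) / (1 - (\<Sum>j\<in>UNIV. p t j)))
                      - v $ i / p t i - (- v $ i) / (1 - p t i)) * v $ i)) (at t)"
    by (rule derivative_eq_intros dp refl pos | simp)+ (simp add: algebra_simps)
  also have "(\<Sum>i\<in>UNIV. (2 * (- (\<Sum>j\<in>UNIV. v $ j) / (1 - (\<Sum>j\<in>UNIV. p t j)))
                      - v $ i / p t i - (- v $ i) / (1 - p t i)) * v $ i)
      = (\<Sum>i\<in>UNIV. (v $ i)\<^sup>2 / (1 - p t i)) - (\<Sum>i\<in>UNIV. (v $ i)\<^sup>2 / p t i)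
          - 2 * (\<Sum>i\<in>UNIV. v $ i)\<^sup>2 / (1 - (\<Sum>j\<in>UNIV. p t j))"
    by (simp add: algebra_simps power2_eq_square sum.distrib sum_subtractf sum_negf
        flip: sum_distrib_left sum_distrib_right sum_divide_distrib)
  finally show ?thesis
    by (simp add: gfun_slope_def gfun_curvature_def p_def)
qed

lemma concave_on_open_simplexk: "concave_on (open_simplexk :: (real^'n) set) gfun"
proof (rule concave_on_if_concave_on_lines[OF convex_open_simplexk])
  fix x v :: "real^'n"
  show "concave_on {t. x + t *\<^sub>R v \<in> open_simplexk} (\<lambda>t. gfun (x + t *\<^sub>R v))"
  proof (rule f''_le0_imp_concave[OF convex_line_vimage[OF convex_open_simplexk]])
    fix t
    assume "t \<in> {t. x + t *\<^sub>R v \<in> open_simplexk}"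
    then have t: "x + t *\<^sub>R v \<in> open_simplexk"
      by simp
    from t show "((\<lambda>s. gfun (x + s *\<^sub>R v)) has_real_derivative gfun_slope (x + t *\<^sub>R v) v) (at t)"
      by (rule gfun_line_has_derivative)
    from t show "((\<lambda>s. gfun_slope (x + s *\<^sub>R v) v) has_real_derivative gfun_curvature (x + t *\<^sub>R v) v) (at t)"
      by (rule gfun_slope_line_has_derivative)
    from t show "gfun_curvature (x + t *\<^sub>R v) v \<le> 0"
      by (rule gfun_curvature_nonpos)
  qed
qed

lemma gfun_slope_axis:
  assumes "x \<in> open_simplexk"
  shows "gfun_slope x (axis i 1) = ln ((1 - (\<Sum>j\<in>UNIV. x $ j))\<^sup>2 / (x $ i * (1 - x $ i)))"
proof -
  have "0 < x $ i" "0 < 1 - x $ i" "0 < 1 - (\<Sum>j\<in>UNIV. x $ j)"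
    using assms open_simplexk_component_lt_1[OF assms] by (auto simp: open_simplexk_def)
  then show ?thesis
    by (simp add: gfun_slope_def axis_def if_distrib ln_div ln_mult ln_realpow cong: if_cong)
qed

theorem mainTheorem8:
  shows "concave_on (simplexk :: (real^'n) set) gfun \<and>
    (\<forall>x \<in> interior (simplexk :: (real^'n) set). \<forall>i.
       ((\<lambda>t. gfun (x + t *\<^sub>R axis i 1)) has_real_derivative
          ln ((1 - (\<Sum>j\<in>UNIV. x $ j))\<^sup>2 / (x $ i * (1 - x $ i)))) (at 0))"
proof (intro conjI ballI allI)
  show "concave_on (simplexk :: (real^'n) set) gfun"
  proof (rule concave_on_if_segments_into[OF concave_on_open_simplexk convex_simplexk])
    show "a + e *\<^sub>R ((\<chi> i. 1 / (2 * real CARD('n))) - a) \<in> open_simplexk"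
      if "a \<in> simplexk" "0 < e" "e \<le> 1" for a :: "real^'n" and e
      using simplexk_segment_into_open[OF _ uniform_point_in_open_simplexk] that by blast
    show "isCont gfun a" for a :: "real^'n"
      unfolding gfun_def[abs_def] by (intro continuous_intros)
  qed
  fix x :: "real^'n" and i
  assume "x \<in> interior simplexk"
  then have "x \<in> open_simplexk"
    using interior_simplexk_subset by blast
  then show "((\<lambda>t. gfun (x + t *\<^sub>R axis i 1)) has_real_derivative
      ln ((1 - (\<Sum>j\<in>UNIV. x $ j))\<^sup>2 / (x $ i * (1 - x $ i)))) (at 0)"
    using gfun_line_has_derivative[of x 0 "axis i 1"] by (simp add: gfun_slope_axis)
qed

end
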